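(* Let $\mathcal{N}$ be a nested set on a connected graph $\Gamma$ such that the full vertex set of $\Gamma$ is not an element of $\mathcal{N}$. Then there is a vertex $x$ of $\Gamma$ which is not contained in any element of $\mathcal{N}$.
   Context: A nested set on a finite simple graph $\Gamma$ is a collection $\mathcal{N}$ of subsets of the vertex set such that (N1) each $J\in\mathcal{N}$ induces a connected subgraph of $\Gamma$; (N2) for any $I,J\in\mathcal{N}$, either $I\subseteq J$, $J\subseteq I$, or $I\cap J=\emptyset$; (N3) for any $k\geq 2$ pairwise disjoint $J_1,\dots,J_k\in\mathcal{N}$, the induced subgraph on $J_1\cup\cdots\cup J_k$ is not connected. The graph $\Gamma$ itself is identified with its vertex set. *)

theory Defs
  imports Main
begin

definition simple_graph :: "'a set \<Rightarrow> ('a \<Rightarrow> 'a \<Rightarrow> bool) \<Rightarrow> bool" where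
  "simple_graph V E \<longleftrightarrow> finite V \<and> (\<forall>x y. E x y \<longrightarrow> E y x) \<and> (\<forall>x. \<not> E x x)
     \<and> (\<forall>x y. E x y \<longrightarrow> x \<in> V \<and> y \<in> V)"

definition induced_connected :: "('a \<Rightarrow> 'a \<Rightarrow> bool) \<Rightarrow> 'a set \<Rightarrow> bool" where
  "induced_connected E S \<longleftrightarrow> S \<noteq> {} \<and>
     (\<forall>x\<in>S. \<forall>y\<in>S. (\<lambda>u v. u \<in> S \<and> v \<in> S \<and> E u v)\<^sup>*\<^sup>* x y)"

definition nested_set :: "'a set \<Rightarrow> ('a \<Rightarrow> 'a \<Rightarrow> bool) \<Rightarrow> 'a set set \<Rightarrow> bool" where
  "nested_set V E N \<longleftrightarrow>
     (\<forall>J\<in>N. J \<subseteq> V) \<and>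
     (\<forall>J\<in>N. induced_connected E J) \<and>
     (\<forall>I\<in>N. \<forall>J\<in>N. I \<subseteq> J \<or> J \<subseteq> I \<or> I \<inter> J = {}) \<and>
     (\<forall>K. K \<subseteq> N \<longrightarrow> card K \<ge> 2 \<longrightarrow> finite K \<longrightarrow>
        (\<forall>I\<in>K. \<forall>J\<in>K. I \<noteq> J \<longrightarrow> I \<inter> J = {}) \<longrightarrow> \<not> induced_connected E (\<Union>K))"

end

theory Submission
  imports Defs
begin

text \<open>The maximal members of a finite laminar family are pairwise disjoint and have the same
  union as the family. In a nested set whose union is connected, condition (N3) therefore
  forbids two or more maximal members, so the union is itself a member. If every vertex of
  the connected graph were covered by \<open>\<N>\<close>, that union would be the whole vertex set.\<close>

definition laminar :: "'a set set \<Rightarrow> bool" where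
  "laminar N \<longleftrightarrow> (\<forall>I\<in>N. \<forall>J\<in>N. I \<subseteq> J \<or> J \<subseteq> I \<or> I \<inter> J = {})"

definition maximal_members :: "'a set set \<Rightarrow> 'a set set" where
  "maximal_members N = {J\<in>N. \<forall>I\<in>N. J \<subseteq> I \<longrightarrow> I = J}"

lemma maximal_members_subset: "maximal_members N \<subseteq> N"
  unfolding maximal_members_def by blast

lemma laminar_maximal_members_disjoint:
  assumes "laminar N" and "I \<in> maximal_members N" and "J \<in> maximal_members N" and "I \<noteq> J"
  shows "I \<inter> J = {}"
proof -
  have "I \<in> N" "J \<in> N" and "I \<subseteq> J \<Longrightarrow> J = I" and "J \<subseteq> I \<Longrightarrow> I = J"
    using assms(2,3) unfolding maximal_members_def by auto
  then show ?thesis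
    using assms(1,4) unfolding laminar_def by blast
qed

lemma Union_maximal_members:
  assumes "finite N"
  shows "\<Union>(maximal_members N) = \<Union>N"
proof
  show "\<Union>(maximal_members N) \<subseteq> \<Union>N"
    using maximal_members_subset by blast
  show "\<Union>N \<subseteq> \<Union>(maximal_members N)"
  proof
    fix x assume "x \<in> \<Union>N"
    then obtain J where "J \<in> N" "x \<in> J" by blast
    moreover obtain M where "M \<in> N" "J \<subseteq> M" "\<forall>I\<in>N. M \<subseteq> I \<longrightarrow> M = I"
      using finite_has_maximal2[OF assms \<open>J \<in> N\<close>] by blast
    ultimately show "x \<in> \<Union>(maximal_members N)"
      unfolding maximal_members_def by blast
  qed
qed

lemma nested_set_laminar: "nested_set V E N \<Longrightarrow> laminar N"
  unfolding nested_set_def laminar_def by blast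

lemma nested_set_disjoint_Union_not_connected:
  assumes "nested_set V E N" and "K \<subseteq> N" and "finite K" and "card K \<ge> 2"
    and "\<forall>I\<in>K. \<forall>J\<in>K. I \<noteq> J \<longrightarrow> I \<inter> J = {}"
  shows "\<not> induced_connected E (\<Union>K)"
proof -
  have "\<forall>K. K \<subseteq> N \<longrightarrow> card K \<ge> 2 \<longrightarrow> finite K \<longrightarrow>
      (\<forall>I\<in>K. \<forall>J\<in>K. I \<noteq> J \<longrightarrow> I \<inter> J = {}) \<longrightarrow> \<not> induced_connected E (\<Union>K)"
    using assms(1) unfolding nested_set_def by (elim conjE)
  then show ?thesis
    using assms(2-5) by blast
qed

lemma nested_set_subset: "nested_set V E N \<Longrightarrow> J \<in> N \<Longrightarrow> J \<subseteq> V"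
  unfolding nested_set_def by (elim conjE) blast

lemma nested_set_finite:
  assumes "finite V" and "nested_set V E N"
  shows "finite N"
proof -
  have "N \<subseteq> Pow V"
    using nested_set_subset[OF assms(2)] by blast
  then show ?thesis
    using assms(1) by (simp add: finite_subset)
qed

lemma nested_set_Union_mem:
  assumes "finite V" and "nested_set V E N" and "induced_connected E (\<Union>N)"
  shows "\<Union>N \<in> N"
proof -
  define K where "K = maximal_members N"
  have "finite N"
    using assms(1,2) by (rule nested_set_finite)
  then have union: "\<Union>K = \<Union>N"
    unfolding K_def by (rule Union_maximal_members)
  have "K \<subseteq> N"
    unfolding K_def by (rule maximal_members_subset)
  with \<open>finite N\<close> have "finite K"
    by (simp add: finite_subset)
  have disjoint: "\<forall>I\<in>K. \<forall>J\<in>K. I \<noteq> J \<longrightarrow> I \<inter> J = {}"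
    unfolding K_def
    using laminar_maximal_members_disjoint[OF nested_set_laminar[OF assms(2)]] by blast
  have "\<not> card K \<ge> 2"
    using nested_set_disjoint_Union_not_connected[OF assms(2) \<open>K \<subseteq> N\<close> \<open>finite K\<close> _ disjoint]
      assms(3) union by auto
  moreover have "K \<noteq> {}"
    using assms(3) union unfolding induced_connected_def by auto
  ultimately have "card K = 1"
    using \<open>finite K\<close> card_gt_0_iff[of K] by linarith
  then obtain M where "K = {M}"
    by (rule card_1_singletonE)
  then show ?thesis
    using union \<open>K \<subseteq> N\<close> by auto
qed

theorem lemma5p5:
  fixes V :: "'a set" and E :: "'a \<Rightarrow> 'a \<Rightarrow> bool" and N :: "'a set set"
  assumes "simple_graph V E"
    and "induced_connected E V"
    and "nested_set V E N"
    and "V \<notin> N"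
  shows "\<exists>x\<in>V. \<forall>J\<in>N. x \<notin> J"
proof (rule ccontr)
  assume "\<not> ?thesis"
  moreover have "\<Union>N \<subseteq> V"
    using nested_set_subset[OF assms(3)] by blast
  ultimately have union: "\<Union>N = V"
    by blast
  have "finite V"
    using assms(1) unfolding simple_graph_def by blast
  then have "V \<in> N"
    using nested_set_Union_mem[OF _ assms(3)] assms(2) unfolding union by blast
  with assms(4) show False ..
qed

end
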